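(* For any linear $t$-private PIR scheme ($t\ge1$), any file indices $i,i'\in[m]$ and any $\mathcal{F}\subseteq[m]$, $$\mathbb{E}_{\mathbf{q}\sim Q^i}\,|\mathrm{colsupp}(\mathbf{q}[\psi_\alpha(\mathcal{F}),:])|=\mathbb{E}_{\mathbf{q}\sim Q^{i'}}\,|\mathrm{colsupp}(\mathbf{q}[\psi_\alpha(\mathcal{F}),:])|,$$ where the expectations are over the query distributions for files $i$ and $i'$ respectively.
   Context: In a linear PIR scheme with $n$ servers and $m$ files (each with $\alpha$ stripes), the query for file $i$ is a random matrix $Q^i$ with realizations $\mathbf{q}\in\mathbb{F}^{\alpha m\times\beta n}$, and server $j$ receives the columns $\psi_\beta(\{j\})$, where $\psi_\beta(\mathcal{I})=\bigcup_{i\in\mathcal{I}}\{(i-1)\beta+1,\dots,i\beta\}$. Privacy implies in particular that the query received by each single server has the same distribution for every desired index. $\mathbf{q}[\mathcal{I},:]$ is the submatrix of rows $\mathcal{I}$; $\mathrm{colsupp}$ denotes the set of indices of nonzero columns. *)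

theory Defs
  imports "HOL-Probability.Probability"
begin

text \<open>Matrices over a field are functions from (row, column) indices to entries;
  indices are 1-based as in the paper.\<close>
type_synonym 'f matrix = "nat \<Rightarrow> nat \<Rightarrow> 'f"

definition psi :: "nat \<Rightarrow> nat set \<Rightarrow> nat set" where
  "psi b I = (\<Union>i\<in>I. {(i - 1) * b + 1 .. i * b})"

text \<open>Submatrix with rows R and columns C (other entries are set to zero,
  indices are kept).\<close>
definition submat :: "('f::zero) matrix \<Rightarrow> nat set \<Rightarrow> nat set \<Rightarrow> 'f matrix" where
  "submat q R C = (\<lambda>r c. if r \<in> R \<and> c \<in> C then q r c else 0)"

definition colsupp :: "('f::zero) matrix \<Rightarrow> nat \<Rightarrow> nat set" where
  "colsupp q N = {c \<in> {1..N}. \<exists>r. q r c \<noteq> 0}"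

definition query_wf :: "(nat \<Rightarrow> ('f::zero) matrix pmf) \<Rightarrow> nat \<Rightarrow> nat \<Rightarrow> nat \<Rightarrow> nat \<Rightarrow> bool" where
  "query_wf Q m n \<alpha> \<beta> \<longleftrightarrow>
     (\<forall>i\<in>{1..m}. \<forall>q\<in>set_pmf (Q i). \<forall>r c.
        (r \<notin> {1..\<alpha> * m} \<or> c \<notin> {1..\<beta> * n}) \<longrightarrow> q r c = 0)"

text \<open>t-privacy: for every set T of t servers, the joint query received by
  the servers in T (columns psi_beta(T)) has the same distribution for every
  desired file index.\<close>
definition t_private :: "(nat \<Rightarrow> ('f::zero) matrix pmf) \<Rightarrow> nat \<Rightarrow> nat \<Rightarrow> nat \<Rightarrow> nat \<Rightarrow> nat \<Rightarrow> bool" where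
  "t_private Q m n \<alpha> \<beta> t \<longleftrightarrow>
     (\<forall>T. T \<subseteq> {1..n} \<and> card T = t \<longrightarrow>
       (\<forall>i\<in>{1..m}. \<forall>i'\<in>{1..m}.
          map_pmf (\<lambda>q. submat q {1..\<alpha> * m} (psi \<beta> T)) (Q i) =
          map_pmf (\<lambda>q. submat q {1..\<alpha> * m} (psi \<beta> T)) (Q i')))"

end

theory Submission
  imports Defs
begin

text \<open>The column support of the rows \<open>\<psi>\<^sub>\<alpha>(F)\<close> is a sum of column indicators, so by
  linearity of expectation it suffices to treat one column \<open>c\<close> at a time.  Column \<open>c\<close>
  belongs to the block of some server \<open>j\<close>; completing \<open>{j}\<close> to a set \<open>T\<close> of \<open>t\<close> servers,
  \<open>t\<close>-privacy says that the columns \<open>\<psi>\<^sub>\<beta>(T)\<close>, and hence column \<open>c\<close> alone, have the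
  same distribution for every desired file, and so does the indicator of \<open>c\<close>.\<close>

lemma psi_subset_atLeastAtMost:
  assumes "F \<subseteq> {1..m}"
  shows "psi b F \<subseteq> {1..b * m}"
proof
  fix x assume "x \<in> psi b F"
  then obtain i where "i \<in> F" and x: "(i - 1) * b + 1 \<le> x" "x \<le> i * b"
    unfolding psi_def by auto
  with assms have "i * b \<le> m * b" by (auto intro: mult_le_mono1)
  with x have "x \<le> m * b" by linarith
  with x show "x \<in> {1..b * m}" by (simp add: mult.commute)
qed

lemma atLeastAtMost_subset_psi: "{1..b * n} \<subseteq> psi b {1..n}"
proof
  fix c assume c: "c \<in> {1..b * n}"
  then have "b > 0" by (cases b) auto
  define j where "j = (c - 1) div b + 1"
  have "c - 1 < b * n" using c by auto
  then have "(c - 1) div b < n"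
    using \<open>b > 0\<close> by (simp add: div_less_iff_less_mult mult.commute)
  then have "j \<in> {1..n}" by (simp add: j_def)
  moreover have "(j - 1) * b + 1 \<le> c" "c \<le> j * b"
  proof -
    have "(c - 1) div b * b + (c - 1) mod b = c - 1" by (rule div_mult_mod_eq)
    moreover have "(c - 1) mod b < b" using \<open>b > 0\<close> by simp
    moreover have "1 \<le> c" using c by simp
    ultimately have "(c - 1) div b * b + 1 \<le> c" "c \<le> (c - 1) div b * b + b"
      by linarith+
    then show "(j - 1) * b + 1 \<le> c" "c \<le> j * b" by (simp_all add: j_def)
  qed
  ultimately show "c \<in> psi b {1..n}" unfolding psi_def by auto
qed

lemma exists_subset_card_containing:
  assumes "finite A" "j \<in> A" "1 \<le> t" "t \<le> card A"
  shows "\<exists>T\<subseteq>A. j \<in> T \<and> card T = t"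
proof -
  have "t - 1 \<le> card (A - {j})" using assms by simp
  then obtain S where "S \<subseteq> A - {j}" "card S = t - 1" "finite S"
    by (rule obtain_subset_with_card_n)
  with assms show ?thesis by (intro exI[of _ "insert j S"]) (auto simp: card_insert_if)
qed

lemma card_colsupp_submat:
  "real (card (colsupp (submat q R {1..N}) N)) = (\<Sum>c=1..N. of_bool (\<exists>r\<in>R. q r c \<noteq> 0))"
proof -
  have "colsupp (submat q R {1..N}) N = {1..N} \<inter> {c. \<exists>r\<in>R. q r c \<noteq> 0}"
    unfolding colsupp_def submat_def by auto
  then show ?thesis by (simp add: of_bool_def sum.If_cases)
qed

lemma expectation_card_colsupp_submat:
  "measure_pmf.expectation p (\<lambda>q. real (card (colsupp (submat q R {1..N}) N))) =
   (\<Sum>c=1..N. measure_pmf.expectation p (\<lambda>q. of_bool (\<exists>r\<in>R. q r c \<noteq> 0)))"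
proof -
  have "integrable (measure_pmf p) (\<lambda>q. of_bool (\<exists>r\<in>R. q r c \<noteq> 0) :: real)" for c
    by (rule measure_pmf.integrable_const_bound[where B = 1]) auto
  then show ?thesis
    unfolding card_colsupp_submat by (rule Bochner_Integration.integral_sum)
qed

lemma t_private_column_distribution:
  assumes "t_private Q m n \<alpha> \<beta> t" "1 \<le> t" "t \<le> n"
    and "c \<in> {1..\<beta> * n}" "i \<in> {1..m}" "i' \<in> {1..m}"
  shows "map_pmf (\<lambda>q. submat q {1..\<alpha> * m} {c}) (Q i) =
         map_pmf (\<lambda>q. submat q {1..\<alpha> * m} {c}) (Q i')"
proof -
  have "c \<in> psi \<beta> {1..n}" using atLeastAtMost_subset_psi assms(4) by blast
  then obtain j where j: "j \<in> {1..n}" "c \<in> psi \<beta> {j}" unfolding psi_def by blast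
  then obtain T where T: "T \<subseteq> {1..n}" "j \<in> T" "card T = t"
    using exists_subset_card_containing[of "{1..n}" j t] assms(2,3) by auto
  with j(2) have "c \<in> psi \<beta> T" unfolding psi_def by blast
  then have factor: "map_pmf (\<lambda>q. submat q {1..\<alpha> * m} {c}) (Q k) =
      map_pmf (\<lambda>M. submat M {1..\<alpha> * m} {c}) (map_pmf (\<lambda>q. submat q {1..\<alpha> * m} (psi \<beta> T)) (Q k))"
    for k
    unfolding map_pmf_comp by (intro map_pmf_cong ext) (auto simp: submat_def)
  have "map_pmf (\<lambda>q. submat q {1..\<alpha> * m} (psi \<beta> T)) (Q i) =
        map_pmf (\<lambda>q. submat q {1..\<alpha> * m} (psi \<beta> T)) (Q i')"
    using assms(1,5,6) T(1,3) unfolding t_private_def by blast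
  then show ?thesis unfolding factor by simp
qed

lemma t_private_column_nonzero_expectation:
  assumes "t_private Q m n \<alpha> \<beta> t" "1 \<le> t" "t \<le> n"
    and "c \<in> {1..\<beta> * n}" "i \<in> {1..m}" "i' \<in> {1..m}" "R \<subseteq> {1..\<alpha> * m}"
  shows "measure_pmf.expectation (Q i) (\<lambda>q. of_bool (\<exists>r\<in>R. q r c \<noteq> 0) :: real) =
         measure_pmf.expectation (Q i') (\<lambda>q. of_bool (\<exists>r\<in>R. q r c \<noteq> 0))"
proof -
  let ?column = "\<lambda>q. submat q {1..\<alpha> * m} {c}"
  let ?nonzero = "\<lambda>M. of_bool (\<exists>r\<in>R. M r c \<noteq> 0) :: real"
  have column_entry: "?column q r c = q r c" if "r \<in> R" for q r
    using assms(7) that unfolding submat_def by auto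
  have via_column: "measure_pmf.expectation (Q k) (\<lambda>q. of_bool (\<exists>r\<in>R. q r c \<noteq> 0)) =
        measure_pmf.expectation (map_pmf ?column (Q k)) ?nonzero" for k
    unfolding integral_map_pmf
    by (rule Bochner_Integration.integral_cong[OF refl]) (simp only: column_entry cong: bex_cong)
  show ?thesis
    unfolding via_column t_private_column_distribution[OF assms(1-6)] ..
qed

theorem lemma9:
  fixes Q :: "nat \<Rightarrow> ('f::field) matrix pmf"
    and m n \<alpha> \<beta> t i i' :: nat and F :: "nat set"
  assumes "query_wf Q m n \<alpha> \<beta>"
    and "t_private Q m n \<alpha> \<beta> t"
    and "1 \<le> t" and "t \<le> n"
    and "i \<in> {1..m}" and "i' \<in> {1..m}"
    and "F \<subseteq> {1..m}"
  shows "measure_pmf.expectation (Q i)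
           (\<lambda>q. real (card (colsupp (submat q (psi \<alpha> F) {1..\<beta> * n}) (\<beta> * n))))
       = measure_pmf.expectation (Q i')
           (\<lambda>q. real (card (colsupp (submat q (psi \<alpha> F) {1..\<beta> * n}) (\<beta> * n))))"
  unfolding expectation_card_colsupp_submat
  using t_private_column_nonzero_expectation[OF assms(2-4) _ assms(5,6)]
    psi_subset_atLeastAtMost[OF assms(7)]
  by (intro sum.cong) auto

end
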